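(* Let $\Gamma$ be a finite simple graph and let $K_n$ be the complete graph on $n$ vertices. If $\psi\colon A(K_n)\to A(\Gamma)$ is an injective homomorphism satisfying condition (KK), then there is a full embedding $\iota\colon K_n\to\Gamma$ with $\iota(V(K_n))\subset\mathrm{supp}(\psi)$.
   Context: $A(\Gamma) = \langle V(\Gamma) \mid uv=vu \text{ whenever } \{u,v\}\in E(\Gamma)\rangle$ is the right-angled Artin group; $A(K_n)\cong\mathbb{Z}^n$. A graph embedding is an injective vertex map preserving adjacency; it is full if it also preserves non-adjacency. The support $\mathrm{supp}(g)$ of $g\in A(\Gamma)$ is the set of vertices $v$ such that $v$ or $v^{-1}$ occurs in a (equivalently, any) shortest word representing $g$. For a homomorphism $\psi\colon A(\Lambda)\to A(\Gamma)$, $\mathrm{supp}(\psi)=\bigcup_{v\in V(\Lambda)}\mathrm{supp}(\psi(v))$. A homomorphism $\psi$ satisfies condition (KK) if for every $v\in V(\Lambda)$ the set $\mathrm{supp}(\psi(v))$ consists of mutually adjacent vertices of $\Gamma$. *)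

theory Defs
  imports "HOL-Algebra.Group"
begin

definition finite_simple_graph :: "'a set \<Rightarrow> ('a \<Rightarrow> 'a \<Rightarrow> bool) \<Rightarrow> bool" where
  "finite_simple_graph V E \<longleftrightarrow> finite V \<and>
     (\<forall>u v. E u v \<longrightarrow> u \<in> V \<and> v \<in> V \<and> u \<noteq> v \<and> E v u)"

definition Kn_verts :: "nat \<Rightarrow> nat set" where
  "Kn_verts n = {0..<n}"

definition Kn_adj :: "nat \<Rightarrow> nat \<Rightarrow> nat \<Rightarrow> bool" where
  "Kn_adj n i j \<longleftrightarrow> i < n \<and> j < n \<and> i \<noteq> j"

definition graph_embedding ::
  "'b set \<Rightarrow> ('b \<Rightarrow> 'b \<Rightarrow> bool) \<Rightarrow> 'a set \<Rightarrow> ('a \<Rightarrow> 'a \<Rightarrow> bool) \<Rightarrow> ('b \<Rightarrow> 'a) \<Rightarrow> bool" where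
  "graph_embedding V1 E1 V2 E2 f \<longleftrightarrow> inj_on f V1 \<and> f ` V1 \<subseteq> V2 \<and>
     (\<forall>u\<in>V1. \<forall>v\<in>V1. E1 u v \<longrightarrow> E2 (f u) (f v))"

definition full_embedding ::
  "'b set \<Rightarrow> ('b \<Rightarrow> 'b \<Rightarrow> bool) \<Rightarrow> 'a set \<Rightarrow> ('a \<Rightarrow> 'a \<Rightarrow> bool) \<Rightarrow> ('b \<Rightarrow> 'a) \<Rightarrow> bool" where
  "full_embedding V1 E1 V2 E2 f \<longleftrightarrow> graph_embedding V1 E1 V2 E2 f \<and>
     (\<forall>u\<in>V1. \<forall>v\<in>V1. \<not> E1 u v \<longrightarrow> \<not> E2 (f u) (f v))"

text \<open>Words: lists of letters (v, True) = v and (v, False) = v^-1.\<close>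

type_synonym 'a word = "('a \<times> bool) list"

definition words :: "'a set \<Rightarrow> 'a word set" where
  "words V = lists (V \<times> UNIV)"

inductive raag_step :: "'a set \<Rightarrow> ('a \<Rightarrow> 'a \<Rightarrow> bool) \<Rightarrow> 'a word \<Rightarrow> 'a word \<Rightarrow> bool"
  for V E where
  cancel: "v \<in> V \<Longrightarrow> raag_step V E (xs @ [(v, b), (v, \<not> b)] @ ys) (xs @ ys)"
| swap: "E u v \<Longrightarrow> raag_step V E (xs @ [(u, a), (v, b)] @ ys) (xs @ [(v, b), (u, a)] @ ys)"

definition raag_eq :: "'a set \<Rightarrow> ('a \<Rightarrow> 'a \<Rightarrow> bool) \<Rightarrow> 'a word \<Rightarrow> 'a word \<Rightarrow> bool" where
  "raag_eq V E w w' \<longleftrightarrow> w \<in> words V \<and> w' \<in> words V \<and>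
     (\<lambda>x y. raag_step V E x y \<or> raag_step V E y x)\<^sup>*\<^sup>* w w'"

definition raag_class :: "'a set \<Rightarrow> ('a \<Rightarrow> 'a \<Rightarrow> bool) \<Rightarrow> 'a word \<Rightarrow> 'a word set" where
  "raag_class V E w = {w'. raag_eq V E w w'}"

definition raag :: "'a set \<Rightarrow> ('a \<Rightarrow> 'a \<Rightarrow> bool) \<Rightarrow> 'a word set monoid" where
  "raag V E = \<lparr> carrier = raag_class V E ` words V,
                mult = (\<lambda>X Y. raag_class V E ((SOME x. x \<in> X) @ (SOME y. y \<in> Y))),
                one = raag_class V E [] \<rparr>"

definition raag_gen :: "'a set \<Rightarrow> ('a \<Rightarrow> 'a \<Rightarrow> bool) \<Rightarrow> 'a \<Rightarrow> 'a word set" where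
  "raag_gen V E v = raag_class V E [(v, True)]"

definition raag_supp :: "'a word set \<Rightarrow> 'a set" where
  "raag_supp g = (\<Union>w \<in> {w \<in> g. \<forall>w' \<in> g. length w \<le> length w'}. fst ` set w)"

definition hom_supp :: "'b set \<Rightarrow> ('b word set \<Rightarrow> 'a word set) \<Rightarrow> 'b set \<Rightarrow> ('b \<Rightarrow> 'b \<Rightarrow> bool) \<Rightarrow> 'a set" where
  "hom_supp VL psi VL' EL = (\<Union>v \<in> VL. raag_supp (psi (raag_gen VL' EL v)))"

definition cond_KK :: "'b set \<Rightarrow> ('b \<Rightarrow> 'b \<Rightarrow> bool) \<Rightarrow> ('a \<Rightarrow> 'a \<Rightarrow> bool) \<Rightarrow> ('b word set \<Rightarrow> 'a word set) \<Rightarrow> bool" where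
  "cond_KK VL EL E psi \<longleftrightarrow> (\<forall>v \<in> VL. \<forall>x \<in> raag_supp (psi (raag_gen VL EL v)).
      \<forall>y \<in> raag_supp (psi (raag_gen VL EL v)). x \<noteq> y \<longrightarrow> E x y)"

end

theory Submission
  imports Defs
begin

text \<open>
  Let w_i be a shortest word representing psi(v_i). By (KK) its letters form a clique, and a
  shortest word over a clique never contains a letter with both signs, so every letter of w_i
  has nonzero exponent sum. If a letter a of w_i and a letter b of w_j were distinct and not
  adjacent, then b does not occur in w_i nor a in w_j (again by (KK)), and the signed number of
  pairs (a-letter, later b-letter) -- an invariant of the defining relations -- shows that w_i
  and w_j do not commute, although v_i and v_j do. Hence all letters of all w_i form one clique U.
  Over a clique, words are equal in A(Gamma) exactly when their exponent sums agree, so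
  injectivity of psi makes the n exponent vectors of the w_i linearly independent in Z^U. Thus
  |U| >= n, and any injection of V(K_n) into U is a full embedding.
\<close>

abbreviation letters :: "'a word \<Rightarrow> 'a set" where
  "letters w \<equiv> fst ` set w"

lemma words_append [simp]: "xs @ ys \<in> words V \<longleftrightarrow> xs \<in> words V \<and> ys \<in> words V"
  by (auto simp: words_def)

lemma words_Cons [simp]: "x # ys \<in> words V \<longleftrightarrow> fst x \<in> V \<and> ys \<in> words V"
  by (cases x) (auto simp: words_def)

lemma words_Nil [simp]: "[] \<in> words V"
  by (simp add: words_def)

lemma words_iff_letters: "w \<in> words V \<longleftrightarrow> letters w \<subseteq> V"
  by (induction w) auto

lemma words_concat: "concat ws \<in> words V \<longleftrightarrow> (\<forall>w\<in>set ws. w \<in> words V)"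
  by (induction ws) auto

lemma raag_step_context:
  "raag_step V E x y \<Longrightarrow> raag_step V E (u @ x @ w) (u @ y @ w)"
proof (induction rule: raag_step.induct)
  case (cancel v xs b ys)
  then show ?case using raag_step.cancel[of v V E "u @ xs" b "ys @ w"] by simp
next
  case (swap u' v xs a b ys)
  then show ?case using raag_step.swap[of E u' v V "u @ xs" a b "ys @ w"] by simp
qed

lemma raag_step_letters: "raag_step V E x y \<Longrightarrow> set y \<subseteq> set x"
  by (induction rule: raag_step.induct) auto

lemma raag_steps_letters: "(raag_step V E)\<^sup>*\<^sup>* x y \<Longrightarrow> set y \<subseteq> set x"
  by (induction rule: rtranclp_induct) (auto dest: raag_step_letters)

abbreviation raag_conv :: "'a set \<Rightarrow> ('a \<Rightarrow> 'a \<Rightarrow> bool) \<Rightarrow> 'a word \<Rightarrow> 'a word \<Rightarrow> bool" where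
  "raag_conv V E \<equiv> \<lambda>x y. raag_step V E x y \<or> raag_step V E y x"

lemma raag_conv_context:
  "(raag_conv V E)\<^sup>*\<^sup>* x y \<Longrightarrow> (raag_conv V E)\<^sup>*\<^sup>* (u @ x @ w) (u @ y @ w)"
  by (induction rule: rtranclp_induct)
     (auto intro: rtranclp.rtrancl_into_rtrancl raag_step_context)

lemma raag_conv_sym: "(raag_conv V E)\<^sup>*\<^sup>* x y \<Longrightarrow> (raag_conv V E)\<^sup>*\<^sup>* y x"
  by (induction rule: rtranclp_induct) (auto intro: converse_rtranclp_into_rtranclp)

lemma raag_eq_refl: "w \<in> words V \<Longrightarrow> raag_eq V E w w"
  by (simp add: raag_eq_def)

lemma raag_eq_sym: "raag_eq V E w w' \<Longrightarrow> raag_eq V E w' w"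
  by (auto simp: raag_eq_def intro: raag_conv_sym)

lemma raag_eq_trans: "raag_eq V E w w' \<Longrightarrow> raag_eq V E w' w'' \<Longrightarrow> raag_eq V E w w''"
  by (auto simp: raag_eq_def)

lemma raag_eq_words: "raag_eq V E w w' \<Longrightarrow> w \<in> words V \<and> w' \<in> words V"
  by (simp add: raag_eq_def)

lemma raag_eq_append:
  assumes "raag_eq V E w w'" "raag_eq V E u u'"
  shows "raag_eq V E (w @ u) (w' @ u')"
proof -
  have "(raag_conv V E)\<^sup>*\<^sup>* ([] @ w @ u) ([] @ w' @ u)"
    using assms(1) raag_conv_context unfolding raag_eq_def by blast
  moreover have "(raag_conv V E)\<^sup>*\<^sup>* (w' @ u @ []) (w' @ u' @ [])"
    using assms(2) raag_conv_context unfolding raag_eq_def by blast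
  ultimately show ?thesis using assms unfolding raag_eq_def by auto
qed

lemma raag_eq_Cons: "raag_eq V E w w' \<Longrightarrow> fst x \<in> V \<Longrightarrow> raag_eq V E (x # w) (x # w')"
  using raag_eq_append[of V E "[x]" "[x]" w w'] by (simp add: raag_eq_refl)

lemma raag_eq_of_steps:
  assumes "(raag_step V E)\<^sup>*\<^sup>* x y" "x \<in> words V"
  shows "raag_eq V E x y"
proof -
  have "(raag_conv V E)\<^sup>*\<^sup>* x y"
    using assms(1) by (rule rtranclp_mono[THEN predicate2D, rotated]) auto
  moreover have "y \<in> words V"
    using assms raag_steps_letters by (fastforce simp: words_def)
  ultimately show ?thesis using assms(2) by (simp add: raag_eq_def)
qed

lemma raag_eq_cancel: "v \<in> V \<Longrightarrow> w \<in> words V \<Longrightarrow> raag_eq V E ((v, b) # (v, \<not> b) # w) w"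
  using raag_step.cancel[of v V E "[]" b w] by (auto intro: raag_eq_of_steps)

lemma raag_eq_swap:
  assumes "E u v" "u \<in> V" "v \<in> V"
  shows "raag_eq V E [(u, a), (v, b)] [(v, b), (u, a)]"
proof (rule raag_eq_of_steps)
  show "(raag_step V E)\<^sup>*\<^sup>* [(u, a), (v, b)] [(v, b), (u, a)]"
    using raag_step.swap[where E=E and u=u and v=v and V=V and xs="[]" and ys="[]"] assms(1)
    by auto
qed (use assms in simp)

lemma raag_class_eq_iff:
  "w \<in> words V \<Longrightarrow> raag_class V E w = raag_class V E w' \<longleftrightarrow> raag_eq V E w w'"
  unfolding raag_class_def
  by (auto intro: raag_eq_refl raag_eq_sym raag_eq_trans)

lemma raag_class_eqI: "raag_eq V E w w' \<Longrightarrow> raag_class V E w = raag_class V E w'"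
  by (simp add: raag_class_eq_iff raag_eq_words)

lemma raag_class_in_carrier: "w \<in> words V \<Longrightarrow> raag_class V E w \<in> carrier (raag V E)"
  by (simp add: raag_def)

lemma raag_mult_class:
  assumes "x \<in> words V" "y \<in> words V"
  shows "raag_class V E x \<otimes>\<^bsub>raag V E\<^esub> raag_class V E y = raag_class V E (x @ y)"
proof -
  let ?x = "SOME x'. x' \<in> raag_class V E x" and ?y = "SOME y'. y' \<in> raag_class V E y"
  have "x \<in> raag_class V E x" "y \<in> raag_class V E y"
    using assms by (simp_all add: raag_class_def raag_eq_refl)
  then have "?x \<in> raag_class V E x" "?y \<in> raag_class V E y"
    by (auto intro: someI)
  then have "raag_eq V E (x @ y) (?x @ ?y)"
    by (auto simp: raag_class_def intro: raag_eq_append)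
  then show ?thesis by (simp add: raag_def raag_class_eqI)
qed

lemma raag_gen_commute:
  assumes "E u v" "u \<in> V" "v \<in> V"
  shows "raag_gen V E u \<otimes>\<^bsub>raag V E\<^esub> raag_gen V E v = raag_gen V E v \<otimes>\<^bsub>raag V E\<^esub> raag_gen V E u"
proof -
  have "raag_class V E ([(u, True)] @ [(v, True)]) = raag_class V E ([(v, True)] @ [(u, True)])"
    using raag_eq_swap[where E=E, OF assms] by (simp add: raag_class_eqI)
  then show ?thesis using assms by (simp add: raag_gen_def raag_mult_class)
qed

section \<open>Exponent sums and the linking number\<close>

definition expo :: "'a word \<Rightarrow> 'a \<Rightarrow> int" where
  "expo w v = sum_list (map (\<lambda>p. if fst p = v then (if snd p then 1 else -1) else 0) w)"

lemma expo_Nil [simp]: "expo [] v = 0"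
  by (simp add: expo_def)

lemma expo_Cons [simp]:
  "expo (p # w) v = (if fst p = v then (if snd p then 1 else -1) else 0) + expo w v"
  by (simp add: expo_def)

lemma expo_append [simp]: "expo (xs @ ys) v = expo xs v + expo ys v"
  by (simp add: expo_def)

lemma expo_concat: "expo (concat ws) v = (\<Sum>w\<leftarrow>ws. expo w v)"
  by (induction ws) auto

lemma expo_replicate: "expo (replicate k (j, True)) i = (if j = i then int k else 0)"
  by (induction k) auto

lemma expo_not_letter: "v \<notin> letters w \<Longrightarrow> expo w v = 0"
  by (induction w) auto

lemma expo_raag_step: "raag_step V E x y \<Longrightarrow> expo x = expo y"
  by (induction rule: raag_step.induct) (auto simp: fun_eq_iff)

lemma expo_raag_eq:
  assumes "raag_eq V E x y"
  shows "expo x = expo y"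
proof -
  have "(raag_conv V E)\<^sup>*\<^sup>* x y"
    using assms by (simp add: raag_eq_def)
  then show ?thesis
    by (induction rule: rtranclp_induct) (auto dest: expo_raag_step)
qed

lemma expo_single_sign:
  assumes "(a, \<not> s) \<notin> set w"
  shows "(if s then expo w a else - expo w a) = int (length (filter (\<lambda>p. fst p = a) w))"
  using assms by (induction w) (auto simp: prod_eq_iff)

text \<open>The central coordinate of the image of w in the integral Heisenberg group under
  a \<mapsto> x, b \<mapsto> y and every other vertex \<mapsto> 1. It is invariant unless a and b are adjacent.\<close>

fun linking :: "'a \<Rightarrow> 'a \<Rightarrow> 'a word \<Rightarrow> int" where
  "linking a b [] = 0"
| "linking a b (p # w) = expo [p] a * expo w b + linking a b w"

lemma linking_append:
  "linking a b (xs @ ys) = linking a b xs + linking a b ys + expo xs a * expo ys b"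
  by (induction xs) (simp_all add: algebra_simps)

lemma linking_zero_if_b_absent: "b \<notin> letters w \<Longrightarrow> linking a b w = 0"
  by (induction w) (auto simp: expo_not_letter)

lemma linking_zero_if_a_absent: "a \<notin> letters w \<Longrightarrow> linking a b w = 0"
  by (induction w) auto

lemma linking_raag_step:
  assumes "a \<noteq> b" "\<not> E a b" "\<not> E b a"
  shows "raag_step V E x y \<Longrightarrow> linking a b x = linking a b y"
proof (induction rule: raag_step.induct)
  case (cancel v xs s ys)
  then show ?case using assms(1) by (simp add: linking_append)
next
  case (swap u v xs s t ys)
  then show ?case using assms by (auto simp: linking_append algebra_simps)
qed

lemma linking_raag_eq:
  assumes "a \<noteq> b" "\<not> E a b" "\<not> E b a" "raag_eq V E x y"
  shows "linking a b x = linking a b y"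
proof -
  have "(raag_conv V E)\<^sup>*\<^sup>* x y"
    using assms(4) by (simp add: raag_eq_def)
  then show ?thesis
    by (induction rule: rtranclp_induct) (auto dest: linking_raag_step[OF assms(1-3)])
qed

lemma commuting_words_expo_zero:
  assumes "a \<noteq> b" "\<not> E a b" "\<not> E b a" "raag_eq V E (x @ y) (y @ x)"
    and "b \<notin> letters x" "a \<notin> letters y"
  shows "expo x a = 0 \<or> expo y b = 0"
proof -
  have "linking a b (x @ y) = linking a b (y @ x)"
    using linking_raag_eq[OF assms(1-4)] .
  then show ?thesis
    using assms(5,6) by (simp add: linking_append linking_zero_if_b_absent
        linking_zero_if_a_absent expo_not_letter)
qed

section \<open>Words over a clique\<close>

definition clique :: "('a \<Rightarrow> 'a \<Rightarrow> bool) \<Rightarrow> 'a set \<Rightarrow> bool" where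
  "clique E C \<longleftrightarrow> (\<forall>x\<in>C. \<forall>y\<in>C. x \<noteq> y \<longrightarrow> E x y)"

lemma clique_subset: "clique E C \<Longrightarrow> D \<subseteq> C \<Longrightarrow> clique E D"
  unfolding clique_def by blast

lemma raag_steps_move_left:
  assumes "\<forall>y\<in>set ys. E (fst y) a"
  shows "(raag_step V E)\<^sup>*\<^sup>* (xs @ ys @ [(a, t)] @ zs) (xs @ [(a, t)] @ ys @ zs)"
  using assms
proof (induction ys arbitrary: zs rule: rev_induct)
  case Nil
  then show ?case by simp
next
  case (snoc y ys)
  obtain u s where y: "y = (u, s)" by (cases y)
  have "raag_step V E (xs @ (ys @ [y]) @ [(a, t)] @ zs) (xs @ ys @ [(a, t)] @ y # zs)"
    using raag_step.swap[where E=E and u=u and v=a and xs="xs @ ys" and ys=zs and V=V] snoc.prems y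
    by simp
  moreover have "(raag_step V E)\<^sup>*\<^sup>* (xs @ ys @ [(a, t)] @ y # zs) (xs @ [(a, t)] @ ys @ y # zs)"
    using snoc.IH[of "y # zs"] snoc.prems by simp
  ultimately show ?case by (simp add: converse_rtranclp_into_rtranclp)
qed

lemma split_opposite_letters:
  assumes "(a, True) \<in> set w" "(a, False) \<in> set w"
  shows "\<exists>xs t ys zs. w = xs @ (a, t) # ys @ (a, \<not> t) # zs \<and> a \<notin> letters ys"
  using assms
proof (induction w)
  case Nil
  then show ?case by simp
next
  case (Cons x w)
  show ?case
  proof (cases "(a, True) \<in> set w \<and> (a, False) \<in> set w")
    case True
    then obtain xs t ys zs where "w = xs @ (a, t) # ys @ (a, \<not> t) # zs" "a \<notin> letters ys"
      using Cons.IH by blast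
    then show ?thesis by (metis append_Cons)
  next
    case False
    then obtain t where t: "(a, t) \<notin> set w" by blast
    then have x: "x = (a, t)" and "(a, \<not> t) \<in> set w"
      using Cons.prems by (cases t; auto)+
    then obtain ys p zs where w: "w = ys @ p # zs" "fst p = a" "\<forall>y\<in>set ys. fst y \<noteq> a"
      using split_list_first_prop[of w "\<lambda>p. fst p = a"] by fastforce
    then have "p = (a, \<not> t)"
      using t by (cases p) auto
    then have "x # w = [] @ (a, t) # ys @ (a, \<not> t) # zs \<and> a \<notin> letters ys"
      using x w by auto
    then show ?thesis by blast
  qed
qed

lemma clique_word_shorten:
  assumes "w \<in> words V" "clique E (letters w)" "(a, True) \<in> set w" "(a, False) \<in> set w"
  shows "\<exists>w'. raag_eq V E w w' \<and> length w' + 2 = length w \<and> set w' \<subseteq> set w"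
proof -
  obtain xs t ys zs where w: "w = xs @ (a, t) # ys @ (a, \<not> t) # zs" and a: "a \<notin> letters ys"
    using split_opposite_letters[OF assms(3,4)] by blast
  have "\<forall>y\<in>set ys. E (fst y) a"
    using assms(2) a unfolding clique_def w by force
  then have "(raag_step V E)\<^sup>*\<^sup>* ((xs @ [(a, t)]) @ ys @ [(a, \<not> t)] @ zs)
      ((xs @ [(a, t)]) @ [(a, \<not> t)] @ ys @ zs)"
    by (rule raag_steps_move_left)
  moreover have "raag_step V E ((xs @ [(a, t)]) @ [(a, \<not> t)] @ ys @ zs) (xs @ ys @ zs)"
    using raag_step.cancel[of a V E xs t "ys @ zs"] assms(1) w by (simp add: words_iff_letters)
  ultimately have "(raag_step V E)\<^sup>*\<^sup>* w (xs @ ys @ zs)"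
    unfolding w by (simp add: rtranclp.rtrancl_into_rtrancl)
  then have "raag_eq V E w (xs @ ys @ zs)"
    using assms(1) by (rule raag_eq_of_steps)
  moreover have "length (xs @ ys @ zs) + 2 = length w" "set (xs @ ys @ zs) \<subseteq> set w"
    using w by auto
  ultimately show ?thesis by blast
qed

lemma expo_zero_imp_both_signs:
  assumes "a \<in> letters w" "expo w a = 0"
  shows "(a, True) \<in> set w \<and> (a, False) \<in> set w"
proof -
  have "filter (\<lambda>p. fst p = a) w \<noteq> []"
    using assms(1) by (force simp: filter_empty_conv)
  then show ?thesis
    using assms(2) expo_single_sign[of a True w] expo_single_sign[of a False w] by auto
qed

lemma clique_word_expo_zero:
  assumes "w \<in> words V" "clique E (letters w)" "expo w = (\<lambda>_. 0)"
  shows "raag_eq V E w []"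
  using assms
proof (induction "length w" arbitrary: w rule: less_induct)
  case less
  show ?case
  proof (cases w)
    case Nil
    then show ?thesis by (simp add: raag_eq_refl)
  next
    case (Cons x w'')
    have "fst x \<in> letters w" "expo w (fst x) = 0"
      using Cons less.prems(3) by simp_all
    then have "(fst x, True) \<in> set w" "(fst x, False) \<in> set w"
      by (simp_all add: expo_zero_imp_both_signs)
    then obtain w' where w': "raag_eq V E w w'" "length w' + 2 = length w" "set w' \<subseteq> set w"
      using clique_word_shorten[OF less.prems(1,2)] by metis
    have "raag_eq V E w' []"
    proof (rule less.hyps)
      show "length w' < length w" using w'(2) by simp
      show "w' \<in> words V" using raag_eq_words[OF w'(1)] by simp
      show "clique E (letters w')"
        using w'(3) by (intro clique_subset[OF less.prems(2)]) auto
      show "expo w' = (\<lambda>_. 0)"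
        using expo_raag_eq[OF w'(1)] less.prems(3) by simp
    qed
    with w'(1) show ?thesis by (rule raag_eq_trans)
  qed
qed

lemma clique_raag_eq_of_expo:
  assumes "clique E C" "C \<subseteq> V" "letters p \<subseteq> C" "letters q \<subseteq> C" "expo p = expo q"
  shows "raag_eq V E p q"
  using assms(3-5)
proof (induction p arbitrary: q)
  case Nil
  have "raag_eq V E q []"
  proof (rule clique_word_expo_zero)
    show "q \<in> words V" using Nil.prems(2) assms(2) by (simp add: words_iff_letters)
    show "clique E (letters q)" using Nil.prems(2) assms(1) by (rule clique_subset[rotated])
  qed (use Nil.prems(3) in auto)
  then show ?case by (rule raag_eq_sym)
next
  case (Cons x p)
  obtain a s where x: "x = (a, s)" by (cases x)
  have aV: "a \<in> V" and q: "q \<in> words V"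
    using Cons.prems x assms(2) by (auto simp: words_iff_letters)
  have "expo p = expo ((a, \<not> s) # q)"
  proof
    fix v
    show "expo p v = expo ((a, \<not> s) # q) v"
      using fun_cong[OF Cons.prems(3), of v] x by (cases s) auto
  qed
  then have "raag_eq V E p ((a, \<not> s) # q)"
    using Cons.prems x by (intro Cons.IH) auto
  then have "raag_eq V E ((a, s) # p) ((a, s) # (a, \<not> s) # q)"
    using aV by (simp add: raag_eq_Cons)
  moreover have "raag_eq V E ((a, s) # (a, \<not> s) # q) q"
    using aV q by (rule raag_eq_cancel)
  ultimately show ?case using x by (blast intro: raag_eq_trans)
qed

lemma shortest_clique_word_expo_nonzero:
  assumes "w \<in> words V" "clique E (letters w)"
    and "\<forall>w'. raag_eq V E w w' \<longrightarrow> length w \<le> length w'" "a \<in> letters w"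
  shows "expo w a \<noteq> 0"
proof
  assume "expo w a = 0"
  then have "(a, True) \<in> set w" "(a, False) \<in> set w"
    using expo_zero_imp_both_signs[OF assms(4)] by auto
  then obtain w' where "raag_eq V E w w'" "length w' + 2 = length w"
    using clique_word_shorten[OF assms(1,2)] by blast
  moreover from this(1) have "length w \<le> length w'"
    using assms(3) by blast
  ultimately show False by simp
qed

lemma raag_shortest_word:
  assumes "g \<in> carrier (raag V E)"
  obtains w where "g = raag_class V E w" "w \<in> words V" "letters w \<subseteq> raag_supp g"
    "\<forall>w'. raag_eq V E w w' \<longrightarrow> length w \<le> length w'"
proof -
  obtain u where u: "u \<in> words V" "g = raag_class V E u"
    using assms by (auto simp: raag_def)
  then have "u \<in> g" by (simp add: raag_class_def raag_eq_refl)
  then obtain w where w: "w \<in> g" "\<forall>w'\<in>g. length w \<le> length w'"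
    using ex_has_least_nat[of "\<lambda>w. w \<in> g" u length] by blast
  then have uw: "raag_eq V E u w" using u(2) by (simp add: raag_class_def)
  show thesis
  proof
    show g: "g = raag_class V E w" using u(2) uw by (simp add: raag_class_eqI)
    show "w \<in> words V" using raag_eq_words[OF uw] by simp
    show "letters w \<subseteq> raag_supp g" unfolding raag_supp_def using w by blast
    show "\<forall>w'. raag_eq V E w w' \<longrightarrow> length w \<le> length w'"
      using w(2) g by (simp add: raag_class_def)
  qed
qed

lemma hom_gen_shortest_words:
  assumes "psi \<in> hom (raag V' E') (raag V E)"
  obtains w where "\<forall>v\<in>V'. psi (raag_gen V' E' v) = raag_class V E (w v) \<and> w v \<in> words V
      \<and> letters (w v) \<subseteq> raag_supp (psi (raag_gen V' E' v))
      \<and> (\<forall>w'. raag_eq V E (w v) w' \<longrightarrow> length (w v) \<le> length w')"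
proof -
  have "\<exists>w. psi (raag_gen V' E' v) = raag_class V E w \<and> w \<in> words V
      \<and> letters w \<subseteq> raag_supp (psi (raag_gen V' E' v))
      \<and> (\<forall>w'. raag_eq V E w w' \<longrightarrow> length w \<le> length w')" if "v \<in> V'" for v
  proof -
    have "psi (raag_gen V' E' v) \<in> carrier (raag V E)"
      using that hom_in_carrier[OF assms] raag_class_in_carrier[of "[(v, True)]" V' E']
      by (simp add: raag_gen_def)
    then show ?thesis by (rule raag_shortest_word) blast
  qed
  then show thesis using that by metis
qed

lemma hom_raag_positive_word:
  assumes psi: "psi \<in> hom (raag V' E') (raag V E)"
    and f: "\<forall>v\<in>V'. psi (raag_gen V' E' v) = raag_class V E (f v) \<and> f v \<in> words V"
    and "p \<noteq> []" "\<forall>x\<in>set p. fst x \<in> V' \<and> snd x"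
  shows "psi (raag_class V' E' p) = raag_class V E (concat (map (\<lambda>y. f (fst y)) p))"
  using assms(3,4)
proof (induction p)
  case Nil
  then show ?case by simp
next
  case (Cons x p)
  obtain v where x: "x = (v, True)" "v \<in> V'" using Cons.prems(2) by (cases x) auto
  have gen: "psi (raag_class V' E' [x]) = raag_class V E (f v)" "f v \<in> words V"
    using f x by (simp_all add: raag_gen_def)
  show ?case
  proof (cases "p = []")
    case True
    then show ?thesis using gen x by simp
  next
    case False
    have p: "p \<in> words V'" "[x] \<in> words V'"
      using Cons.prems(2) by (auto simp: words_iff_letters)
    have fp: "concat (map (\<lambda>y. f (fst y)) p) \<in> words V"
      using Cons.prems(2) f by (auto simp: words_concat)
    have "psi (raag_class V' E' (x # p))
        = psi (raag_class V' E' [x] \<otimes>\<^bsub>raag V' E'\<^esub> raag_class V' E' p)"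
      using raag_mult_class[OF p(2,1), of E'] by simp
    also have "\<dots> = psi (raag_class V' E' [x]) \<otimes>\<^bsub>raag V E\<^esub> psi (raag_class V' E' p)"
      using p by (intro hom_mult[OF psi] raag_class_in_carrier)
    also have "\<dots> = raag_class V E (f v) \<otimes>\<^bsub>raag V E\<^esub> raag_class V E (concat (map (\<lambda>y. f (fst y)) p))"
      using gen(1) Cons.IH[OF False] Cons.prems(2) by simp
    also have "\<dots> = raag_class V E (concat (map (\<lambda>y. f (fst y)) (x # p)))"
      using raag_mult_class[OF gen(2) fp] x by simp
    finally show ?thesis .
  qed
qed

lemma hom_images_commute:
  assumes psi: "psi \<in> hom (raag V' E') (raag V E)" and "E' u v" "u \<in> V'" "v \<in> V'"
    and "psi (raag_gen V' E' u) = raag_class V E x" "psi (raag_gen V' E' v) = raag_class V E y"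
    and "x \<in> words V" "y \<in> words V"
  shows "raag_eq V E (x @ y) (y @ x)"
proof -
  have gens: "raag_gen V' E' u \<in> carrier (raag V' E')" "raag_gen V' E' v \<in> carrier (raag V' E')"
    using assms(3,4) by (simp_all add: raag_gen_def raag_class_in_carrier)
  have "raag_class V E (x @ y) = psi (raag_gen V' E' u \<otimes>\<^bsub>raag V' E'\<^esub> raag_gen V' E' v)"
    using hom_mult[OF psi gens] assms(5-8) by (simp add: raag_mult_class)
  also have "\<dots> = psi (raag_gen V' E' v \<otimes>\<^bsub>raag V' E'\<^esub> raag_gen V' E' u)"
    using raag_gen_commute[where E=E', OF assms(2-4)] by simp
  also have "\<dots> = raag_class V E (y @ x)"
    using hom_mult[OF psi gens(2,1)] assms(5-8) by (simp add: raag_mult_class)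
  finally show ?thesis using assms(7,8) by (simp add: raag_class_eq_iff)
qed

section \<open>The rank bound\<close>

lemma int_relation_eliminate:
  fixes f :: "'i \<Rightarrow> 'a \<Rightarrow> int"
  assumes "finite I" "k \<in> I" "f k a \<noteq> 0" "\<exists>i\<in>I - {k}. d i \<noteq> 0"
    and d: "\<forall>j. (\<Sum>i\<in>I - {k}. d i * (f k a * f i j - f i a * f k j)) = 0"
  shows "\<exists>c. (\<exists>i\<in>I. c i \<noteq> 0) \<and> (\<forall>j. (\<Sum>i\<in>I. c i * f i j) = 0)"
proof -
  define c where "c i = (if i = k then - (\<Sum>i\<in>I - {k}. d i * f i a) else d i * f k a)" for i
  have "(\<Sum>i\<in>I. c i * f i j) = 0" for j
  proof -
    have "(\<Sum>i\<in>I. c i * f i j) = c k * f k j + (\<Sum>i\<in>I - {k}. c i * f i j)"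
      using sum.remove[OF assms(1,2)] by simp
    also have "\<dots> = (\<Sum>i\<in>I - {k}. f k a * (d i * f i j)) - (\<Sum>i\<in>I - {k}. f k j * (d i * f i a))"
      by (simp add: c_def sum_distrib_left algebra_simps)
    also have "\<dots> = (\<Sum>i\<in>I - {k}. d i * (f k a * f i j - f i a * f k j))"
      by (simp add: sum_subtractf[symmetric] algebra_simps)
    finally show ?thesis using d by simp
  qed
  moreover have "\<exists>i\<in>I. c i \<noteq> 0"
    using assms(3,4) by (auto simp: c_def)
  ultimately show ?thesis by blast
qed

lemma int_vectors_dependent:
  fixes f :: "'i \<Rightarrow> 'a \<Rightarrow> int"
  assumes "finite J" "finite I" "card J < card I" "\<forall>i\<in>I. \<forall>j. j \<notin> J \<longrightarrow> f i j = 0"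
  shows "\<exists>c. (\<exists>i\<in>I. c i \<noteq> 0) \<and> (\<forall>j. (\<Sum>i\<in>I. c i * f i j) = 0)"
  using assms
proof (induction J arbitrary: I f rule: finite_induct)
  case empty
  then obtain i where "i \<in> I" by fastforce
  show ?case
  proof (intro exI conjI)
    show "\<exists>i\<in>I. (\<lambda>_. 1::int) i \<noteq> 0" using \<open>i \<in> I\<close> by (intro bexI[of _ i]) simp_all
    show "\<forall>j. (\<Sum>i\<in>I. (\<lambda>_. 1::int) i * f i j) = 0" using empty.prems(3) by simp
  qed
next
  case (insert a J)
  show ?case
  proof (cases "\<forall>i\<in>I. f i a = 0")
    case True
    show ?thesis
    proof (rule insert.IH[OF insert.prems(1)])
      show "card J < card I" using insert.hyps insert.prems(2) by simp
      show "\<forall>i\<in>I. \<forall>j. j \<notin> J \<longrightarrow> f i j = 0"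
        using True insert.prems(3) by (metis insert_iff)
    qed
  next
    case False
    then obtain k where k: "k \<in> I" "f k a \<noteq> 0" by blast
    \<comment> \<open>Gaussian elimination of the coordinate a with pivot row k.\<close>
    let ?g = "\<lambda>i j. f k a * f i j - f i a * f k j"
    have "\<exists>d. (\<exists>i\<in>I - {k}. d i \<noteq> 0) \<and> (\<forall>j. (\<Sum>i\<in>I - {k}. d i * ?g i j) = 0)"
    proof (rule insert.IH)
      show "finite (I - {k})" using insert.prems(1) by simp
      show "card J < card (I - {k})" using insert k by simp
      show "\<forall>i\<in>I - {k}. \<forall>j. j \<notin> J \<longrightarrow> ?g i j = 0"
      proof (intro ballI allI impI)
        fix i j assume "i \<in> I - {k}" "j \<notin> J"
        then show "?g i j = 0" using insert.prems(3) k(1) by (cases "j = a") auto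
      qed
    qed
    then show ?thesis
      using int_relation_eliminate[where f=f, OF insert.prems(1) k] by blast
  qed
qed

definition pos_word :: "nat \<Rightarrow> (nat \<Rightarrow> nat) \<Rightarrow> nat word" where
  "pos_word n d = concat (map (\<lambda>i. replicate (d i) (i, True)) [0..<n])"

lemma pos_word_Suc: "pos_word (Suc n) d = pos_word n d @ replicate (d n) (n, True)"
  by (simp add: pos_word_def)

lemma pos_word_letters: "x \<in> set (pos_word n d) \<Longrightarrow> fst x < n \<and> snd x"
  by (auto simp: pos_word_def)

lemma pos_word_nonempty: "0 < n \<Longrightarrow> 0 < d 0 \<Longrightarrow> pos_word n d \<noteq> []"
  by (auto simp: pos_word_def)

lemma expo_pos_word: "expo (pos_word n d) i = (if i < n then int (d i) else 0)"
  by (induction n) (auto simp: pos_word_Suc expo_replicate pos_word_def)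

lemma expo_concat_pos_word:
  "expo (concat (map (\<lambda>x. w (fst x)) (pos_word n d))) v = (\<Sum>i\<in>{0..<n}. int (d i) * expo (w i) v)"
  by (induction n) (simp_all add: pos_word_Suc expo_concat sum_list_replicate pos_word_def)

lemma card_clique_ge_of_inj_hom:
  assumes psi: "psi \<in> hom (raag {0..<n} E') (raag V E)"
    and inj: "inj_on psi (carrier (raag {0..<n} E'))"
    and w: "\<forall>i<n. psi (raag_gen {0..<n} E' i) = raag_class V E (w i) \<and> w i \<in> words V
      \<and> letters (w i) \<subseteq> U"
    and U: "clique E U" "U \<subseteq> V" "finite U"
  shows "n \<le> card U"
proof (rule ccontr)
  assume "\<not> n \<le> card U"
  then have lt: "card U < card {0..<n}" and n: "0 < n" by simp_all
  have gens: "\<forall>i\<in>{0..<n}. psi (raag_gen {0..<n} E' i) = raag_class V E (w i) \<and> w i \<in> words V"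
    and letters_w: "\<And>i. i < n \<Longrightarrow> letters (w i) \<subseteq> U"
    using w by simp_all
  have "\<forall>i\<in>{0..<n}. \<forall>v. v \<notin> U \<longrightarrow> expo (w i) v = 0"
    using letters_w by (metis atLeastLessThan_iff expo_not_letter subsetD)
  then obtain c where c: "\<exists>i\<in>{0..<n}. c i \<noteq> 0" "\<And>v. (\<Sum>i\<in>{0..<n}. c i * expo (w i) v) = 0"
    using int_vectors_dependent[where f="\<lambda>i. expo (w i)", OF U(3) finite_atLeastLessThan lt]
    by blast
  \<comment> \<open>Split c into two positive words with the same image; the summand 1 keeps them nonempty,
    since a HOL-Algebra homomorphism is not required to preserve the unit.\<close>
  define d1 where "d1 i = nat (c i) + 1" for i
  define d2 where "d2 i = nat (- c i) + 1" for i
  let ?P = "\<lambda>d. concat (map (\<lambda>x. w (fst x)) (pos_word n d))"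
  have pos: "\<forall>x\<in>set (pos_word n d). fst x \<in> {0..<n} \<and> snd x" for d
    using pos_word_letters by simp
  have image: "psi (raag_class {0..<n} E' (pos_word n d)) = raag_class V E (?P d)" if "0 < d 0" for d
    using hom_raag_positive_word[OF psi gens pos_word_nonempty[where d=d, OF n that] pos] .
  have "expo (?P d1) = expo (?P d2)"
  proof
    fix v
    have "int (d1 i) - int (d2 i) = c i" for i
      unfolding d1_def d2_def by (cases "0 \<le> c i") simp_all
    then have "(\<Sum>i\<in>{0..<n}. int (d1 i) * expo (w i) v) - (\<Sum>i\<in>{0..<n}. int (d2 i) * expo (w i) v)
        = (\<Sum>i\<in>{0..<n}. c i * expo (w i) v)"
      by (simp add: sum_subtractf[symmetric] left_diff_distrib[symmetric])
    then show "expo (?P d1) v = expo (?P d2) v"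
      unfolding expo_concat_pos_word c by simp
  qed
  moreover have "letters (?P d) \<subseteq> U" for d
  proof
    fix a assume "a \<in> letters (?P d)"
    then obtain x where "x \<in> set (pos_word n d)" "a \<in> letters (w (fst x))" by auto
    then show "a \<in> U" using letters_w pos_word_letters by blast
  qed
  ultimately have "raag_eq V E (?P d1) (?P d2)"
    using clique_raag_eq_of_expo[OF U(1,2)] by blast
  then have "psi (raag_class {0..<n} E' (pos_word n d1)) = psi (raag_class {0..<n} E' (pos_word n d2))"
    using image by (simp add: d1_def d2_def raag_class_eqI)
  moreover have words: "pos_word n d \<in> words {0..<n}" for d
    using pos_word_letters by (fastforce simp: words_iff_letters)
  ultimately have "raag_class {0..<n} E' (pos_word n d1) = raag_class {0..<n} E' (pos_word n d2)"
    using inj by (simp add: inj_on_def raag_class_in_carrier)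
  then have expo_eq: "expo (pos_word n d1) = expo (pos_word n d2)"
    using words by (simp add: raag_class_eq_iff expo_raag_eq)
  have "d1 i = d2 i" if "i < n" for i
  proof -
    have "expo (pos_word n d1) i = expo (pos_word n d2) i" using expo_eq by simp
    then show ?thesis using that by (simp add: expo_pos_word)
  qed
  moreover obtain i where "i < n" "c i \<noteq> 0" using c(1) by auto
  ultimately have "nat (c i) = nat (- c i)" "c i \<noteq> 0"
    by (simp_all add: d1_def d2_def)
  then show False by (cases "0 \<le> c i") simp_all
qed

lemma clique_union_commuting_words:
  assumes sym: "\<And>u v. E u v \<Longrightarrow> E v u"
    and cl: "\<forall>i\<in>I. clique E (letters (w i))"
    and nz: "\<forall>i\<in>I. \<forall>a\<in>letters (w i). expo (w i) a \<noteq> 0"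
    and comm: "\<forall>i\<in>I. \<forall>j\<in>I. raag_eq V E (w i @ w j) (w j @ w i)"
  shows "clique E (\<Union>i\<in>I. letters (w i))"
  unfolding clique_def
proof (intro ballI impI)
  fix a b assume "a \<in> (\<Union>i\<in>I. letters (w i))" "b \<in> (\<Union>i\<in>I. letters (w i))" and ab: "a \<noteq> b"
  then obtain i j where i: "i \<in> I" "a \<in> letters (w i)" and j: "j \<in> I" "b \<in> letters (w j)"
    by blast
  show "E a b"
  proof (rule ccontr)
    assume nab: "\<not> E a b"
    then have nba: "\<not> E b a" using sym by blast
    have "b \<notin> letters (w i)" "a \<notin> letters (w j)"
      using cl i j nab nba ab unfolding clique_def by blast+
    then have "expo (w i) a = 0 \<or> expo (w j) b = 0"
      using commuting_words_expo_zero[OF ab nab nba] comm i(1) j(1) by blast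
    then show False using nz i j by blast
  qed
qed

lemma full_embedding_Kn_into_clique:
  assumes "\<And>u. \<not> E u u" "clique E U" "U \<subseteq> V" "finite U" "n \<le> card U"
  shows "\<exists>iota. full_embedding (Kn_verts n) (Kn_adj n) V E iota \<and> iota ` Kn_verts n \<subseteq> U"
proof -
  obtain iota where io: "iota ` {0..<n} \<subseteq> U" "inj_on iota {0..<n}"
    using card_le_inj[of "{0..<n}" U] assms(4,5) by auto
  have "full_embedding (Kn_verts n) (Kn_adj n) V E iota"
    unfolding full_embedding_def graph_embedding_def Kn_verts_def
  proof (intro conjI ballI impI)
    show "inj_on iota {0..<n}" "iota ` {0..<n} \<subseteq> V" using io assms(3) by auto
  next
    fix u v assume "u \<in> {0..<n}" "v \<in> {0..<n}" "Kn_adj n u v"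
    then show "E (iota u) (iota v)"
      using io assms(2) unfolding clique_def inj_on_def Kn_adj_def by blast
  next
    fix u v assume "\<not> Kn_adj n u v" "u \<in> {0..<n}" "v \<in> {0..<n}"
    then show "\<not> E (iota u) (iota v)"
      using assms(1) by (simp add: Kn_adj_def)
  qed
  then show ?thesis using io by (auto simp: Kn_verts_def)
qed

lemma clique_letters_of_shortest_images:
  assumes psi: "psi \<in> hom (raag V' E') (raag V E)" and sym: "\<And>u v. E u v \<Longrightarrow> E v u"
    and complete: "\<And>i j. i \<in> V' \<Longrightarrow> j \<in> V' \<Longrightarrow> i \<noteq> j \<Longrightarrow> E' i j"
    and KK: "cond_KK V' E' E psi"
    and w: "\<forall>i\<in>V'. psi (raag_gen V' E' i) = raag_class V E (w i) \<and> w i \<in> words V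
      \<and> letters (w i) \<subseteq> raag_supp (psi (raag_gen V' E' i))
      \<and> (\<forall>w'. raag_eq V E (w i) w' \<longrightarrow> length (w i) \<le> length w')"
  shows "clique E (\<Union>i\<in>V'. letters (w i))"
proof (rule clique_union_commuting_words[OF sym])
  show cliques: "\<forall>i\<in>V'. clique E (letters (w i))"
    using w KK unfolding cond_KK_def clique_def by (meson subsetD)
  show "\<forall>i\<in>V'. \<forall>a\<in>letters (w i). expo (w i) a \<noteq> 0"
  proof (intro ballI)
    fix i a assume "i \<in> V'" "a \<in> letters (w i)"
    then show "expo (w i) a \<noteq> 0"
      using w cliques by (intro shortest_clique_word_expo_nonzero[of "w i" V E]) auto
  qed
  show "\<forall>i\<in>V'. \<forall>j\<in>V'. raag_eq V E (w i @ w j) (w j @ w i)"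
  proof (intro ballI)
    fix i j assume i: "i \<in> V'" and j: "j \<in> V'"
    show "raag_eq V E (w i @ w j) (w j @ w i)"
    proof (cases "i = j")
      case True
      then show ?thesis using w i by (simp add: raag_eq_refl)
    next
      case False
      then show ?thesis using hom_images_commute[OF psi complete[OF i j False] i j] w i j by simp
    qed
  qed
qed

theorem lemma3p4:
  fixes V :: "'a set" and E :: "'a \<Rightarrow> 'a \<Rightarrow> bool" and n :: nat
    and psi :: "nat word set \<Rightarrow> 'a word set"
  assumes "finite_simple_graph V E"
    and "psi \<in> hom (raag (Kn_verts n) (Kn_adj n)) (raag V E)"
    and "inj_on psi (carrier (raag (Kn_verts n) (Kn_adj n)))"
    and "cond_KK (Kn_verts n) (Kn_adj n) E psi"
  shows "\<exists>iota. full_embedding (Kn_verts n) (Kn_adj n) V E iota \<and>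
           iota ` Kn_verts n \<subseteq> hom_supp (Kn_verts n) psi (Kn_verts n) (Kn_adj n)"
proof -
  let ?K = "Kn_verts n"
  have K: "?K = {0..<n}" by (simp add: Kn_verts_def)
  have finV: "finite V" and sym: "\<And>u v. E u v \<Longrightarrow> E v u" and irrefl: "\<And>u. \<not> E u u"
    using assms(1) unfolding finite_simple_graph_def by blast+
  obtain w where w: "\<forall>i\<in>?K. psi (raag_gen ?K (Kn_adj n) i) = raag_class V E (w i) \<and> w i \<in> words V
      \<and> letters (w i) \<subseteq> raag_supp (psi (raag_gen ?K (Kn_adj n) i))
      \<and> (\<forall>w'. raag_eq V E (w i) w' \<longrightarrow> length (w i) \<le> length w')"
    using hom_gen_shortest_words[OF assms(2)] by blast
  define U where "U = (\<Union>i\<in>?K. letters (w i))"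
  have complete: "\<And>i j. i \<in> ?K \<Longrightarrow> j \<in> ?K \<Longrightarrow> i \<noteq> j \<Longrightarrow> Kn_adj n i j"
    by (simp add: K Kn_adj_def)
  have clique_U: "clique E U"
    using clique_letters_of_shortest_images[OF assms(2) sym complete assms(4) w] by (simp add: U_def)
  have UV: "U \<subseteq> V"
    using w unfolding U_def words_iff_letters by blast
  then have fin_U: "finite U"
    using finV by (rule finite_subset)
  have "n \<le> card U"
    by (rule card_clique_ge_of_inj_hom[OF _ _ _ clique_U UV fin_U])
      (use assms(2,3) w in \<open>auto simp: K U_def\<close>)
  then obtain iota where "full_embedding ?K (Kn_adj n) V E iota" "iota ` ?K \<subseteq> U"
    using full_embedding_Kn_into_clique[where E=E, OF irrefl clique_U UV fin_U] by blast
  moreover have "U \<subseteq> hom_supp ?K psi ?K (Kn_adj n)"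
    using w unfolding U_def hom_supp_def by blast
  ultimately show ?thesis by blast
qed

end
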